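(* Let $q$ be a prime power, and let $\pi,\sigma\in P$ with $\pi(x)=a+\frac{r}{x-i}$ and $\sigma(x)=b+\frac{s}{x-j}$ (i.e. $\pi=f_{a,r,i}$, $\sigma=f_{b,s,j}$ with $r,s\neq 0$). Then $hd(\pi^{\triangle},\sigma^{\triangle})=hd(\pi,\sigma)-3$ if and only if $r=s$ and $(b-a)(j-i)=r$.
   Context: For $K,i\in GF(q)$ and $r\in GF(q)\setminus\{0\}$, $f_{K,r,i}:GF(q)\cup\{\infty\}\to GF(q)\cup\{\infty\}$ is the permutation given by $f_{K,r,i}(x)=K+\frac{r}{x-i}$ for $x\notin\{i,\infty\}$, $f_{K,r,i}(\infty)=K$, $f_{K,r,i}(i)=\infty$; $P$ is the set of all such $f_{K,r,i}$. For permutations $\pi,\sigma$ of a finite set, $hd(\pi,\sigma)$ is the number of points at which they differ. The distinguished element is $F=\infty$: for a permutation $\pi$ of $GF(q)\cup\{\infty\}$, $\pi^{\triangle}$ is the permutation with $\pi^{\triangle}(\pi^{-1}(\infty))=\pi(\infty)$, $\pi^{\triangle}(\infty)=\infty$, and $\pi^{\triangle}(x)=\pi(x)$ otherwise. *)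

theory Defs
  imports Main
begin

text \<open>GF(q) is modelled by an arbitrary finite field type 'a (its cardinality is
a prime power); GF(q) cup {infinity} is 'a option with None = infinity.\<close>

definition fKri :: "'a::{field,finite} \<Rightarrow> 'a \<Rightarrow> 'a \<Rightarrow> 'a option \<Rightarrow> 'a option" where
  "fKri K r i x = (case x of
       None \<Rightarrow> Some K
     | Some y \<Rightarrow> (if y = i then None else Some (K + r / (y - i))))"

definition Pset :: "('a::{field,finite} option \<Rightarrow> 'a option) set" where
  "Pset = {fKri K r i | K r i. r \<noteq> 0}"

definition hdist :: "('b::finite \<Rightarrow> 'c) \<Rightarrow> ('b \<Rightarrow> 'c) \<Rightarrow> nat" where
  "hdist \<pi> \<sigma> = card {x. \<pi> x \<noteq> \<sigma> x}"

definition tri :: "('a option \<Rightarrow> 'a option) \<Rightarrow> 'a option \<Rightarrow> 'a option" where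
  "tri \<pi> x = (if x = None then None else if \<pi> x = None then \<pi> None else \<pi> x)"

end

theory Submission
  imports Defs
begin

text \<open>The two permutations and their triangle versions coincide off the three points
  \<infinity>, i, j, so only those points can change the Hamming distance. When i = j nothing
  changes there. When i \<noteq> j, \<pi> and \<sigma> disagree at i and at j (one value is \<infinity>) and at
  \<infinity> iff a \<noteq> b, while the triangle versions agree at \<infinity> and disagree at i iff
  a \<noteq> \<sigma>(i) and at j iff \<pi>(j) \<noteq> b. A drop by 3 thus means a \<noteq> b, a = \<sigma>(i) and
  \<pi>(j) = b, which unfolds to r = s and (b - a)(j - i) = r.\<close>

lemma hdist_diff_local:
  fixes f g f' g' :: "'b::finite \<Rightarrow> 'c"
  assumes "\<And>x. x \<notin> K \<Longrightarrow> f' x = f x \<and> g' x = g x"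
  shows "int (hdist f' g') - int (hdist f g)
       = int (card {x\<in>K. f' x \<noteq> g' x}) - int (card {x\<in>K. f x \<noteq> g x})"
proof -
  have split: "hdist h k = card {x\<in>K. h x \<noteq> k x} + card {x\<in>-K. h x \<noteq> k x}"
    for h k :: "'b \<Rightarrow> 'c"
  proof -
    have "{x. h x \<noteq> k x} = {x\<in>K. h x \<noteq> k x} \<union> {x\<in>-K. h x \<noteq> k x}" by blast
    then show ?thesis
      unfolding hdist_def by (simp add: card_Un_disjoint disjoint_iff)
  qed
  have "{x\<in>-K. f' x \<noteq> g' x} = {x\<in>-K. f x \<noteq> g x}"
    using assms by auto
  then show ?thesis
    using split[of f' g'] split[of f g] by simp
qed

lemma Collect_conj_insert:
  "{x\<in>insert u A. P x} = (if P u then insert u {x\<in>A. P x} else {x\<in>A. P x})"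
  by auto

lemma card_filter_two:
  assumes "u \<noteq> v"
  shows "card {x\<in>{u, v}. P x} = of_bool (P u) + of_bool (P v)"
  unfolding Collect_conj_insert using assms by simp

lemma card_filter_three:
  assumes "u \<noteq> v" "u \<noteq> w" "v \<noteq> w"
  shows "card {x\<in>{u, v, w}. P x} = of_bool (P u) + of_bool (P v) + of_bool (P w)"
  unfolding Collect_conj_insert using assms by simp

lemma fKri_infinity [simp]: "fKri K r i None = Some K"
  and fKri_pole [simp]: "fKri K r i (Some i) = None"
  and fKri_Some: "y \<noteq> i \<Longrightarrow> fKri K r i (Some y) = Some (K + r / (y - i))"
  by (simp_all add: fKri_def)

lemma fKri_eq_None_iff [simp]: "fKri K r i x = None \<longleftrightarrow> x = Some i"
  by (cases x) (simp_all add: fKri_def)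

lemma tri_infinity [simp]: "tri \<pi> None = None"
  and tri_preimage_infinity: "x \<noteq> None \<Longrightarrow> \<pi> x = None \<Longrightarrow> tri \<pi> x = \<pi> None"
  and tri_eq: "x \<noteq> None \<Longrightarrow> \<pi> x \<noteq> None \<Longrightarrow> tri \<pi> x = \<pi> x"
  by (auto simp: tri_def)

lemma tri_fKri_pole [simp]: "tri (fKri K r i) (Some i) = Some K"
  by (simp add: tri_preimage_infinity)

lemma tri_fKri_eq: "x \<notin> {None, Some i} \<Longrightarrow> tri (fKri K r i) x = fKri K r i x"
  by (simp add: tri_eq)

lemma pole_values_match_iff:
  fixes a b r s i j :: "'a::field"
  assumes "r \<noteq> 0" "i \<noteq> j"
  shows "(a \<noteq> b \<and> a = b + s / (i - j) \<and> a + r / (j - i) = b)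
       \<longleftrightarrow> (r = s \<and> (b - a) * (j - i) = r)"
proof -
  have "i - j \<noteq> 0" "j - i \<noteq> 0" using assms(2) by auto
  then have "a = b + s / (i - j) \<longleftrightarrow> (b - a) * (j - i) = s"
    and "a + r / (j - i) = b \<longleftrightarrow> (b - a) * (j - i) = r"
    by (auto simp: field_simps)
  then show ?thesis using assms(1) by auto
qed

theorem lemma10:
  fixes a b r s i j :: "'a::{field,finite}"
  assumes "r \<noteq> 0" and "s \<noteq> 0"
  shows "int (hdist (tri (fKri a r i)) (tri (fKri b s j))) = int (hdist (fKri a r i) (fKri b s j)) - 3
         \<longleftrightarrow> (r = s \<and> (b - a) * (j - i) = r)"
proof -
  let ?\<pi> = "fKri a r i" and ?\<sigma> = "fKri b s j"
  have local: "int (hdist (tri ?\<pi>) (tri ?\<sigma>)) - int (hdist ?\<pi> ?\<sigma>)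
      = int (card {x\<in>{None, Some i, Some j}. tri ?\<pi> x \<noteq> tri ?\<sigma> x})
        - int (card {x\<in>{None, Some i, Some j}. ?\<pi> x \<noteq> ?\<sigma> x})"
    by (rule hdist_diff_local) (simp add: tri_fKri_eq)
  show ?thesis
  proof (cases "i = j")
    case True
    then have "{None, Some i, Some j} = {None, Some i}" by simp
    from local[unfolded this card_filter_two[OF option.distinct(1)]] True
    have "int (hdist (tri ?\<pi>) (tri ?\<sigma>)) - int (hdist ?\<pi> ?\<sigma>) = 0"
      by simp
    then show ?thesis
      using True assms(1) by simp
  next
    case False
    then have "Some i \<noteq> Some j" by simp
    from local[unfolded card_filter_three[OF option.distinct(1) option.distinct(1) this]] False
    have "int (hdist (tri ?\<pi>) (tri ?\<sigma>)) - int (hdist ?\<pi> ?\<sigma>)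
        = of_bool (a \<noteq> b + s / (i - j)) + of_bool (a + r / (j - i) \<noteq> b) - of_bool (a \<noteq> b) - 2"
      using False[symmetric] by (simp add: fKri_Some tri_fKri_eq)
    then have "int (hdist (tri ?\<pi>) (tri ?\<sigma>)) = int (hdist ?\<pi> ?\<sigma>) - 3
        \<longleftrightarrow> (a \<noteq> b \<and> a = b + s / (i - j) \<and> a + r / (j - i) = b)"
      unfolding of_bool_def by (auto split: if_splits)
    with pole_values_match_iff[OF assms(1) False] show ?thesis by simp
  qed
qed

end
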